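(* Fix a static program and its associated dimension function $\#$. For any expression context $C[\cdot]$ and expressions $e,e'$, if $\#(e)\sqsubseteq\#(e')$ then $\#(C[e])\sqsubseteq\#(C[e'])$.
   Context: Expressions: fix countable sets of variables $\mathbb{X}$, procedure names $\mathbb{F}$, primitive names $\Pi$, handles $\mathbb{H}$, and a set of values $\mathbb{C}$. Expressions are $e ::= x_h \mid c_h \mid [\mathrm{let}_h\,x_1\dots x_n \text{ be } e \text{ in } e] \mid [\mathrm{call}_h\,f\ e_1\dots e_n] \mid [\mathrm{primitive}_h\,\pi\ e_1\dots e_n] \mid [\mathrm{if}_h\,e\in\{c_1,\dots,c_n\}\text{ then } e \text{ else } e] \mid [\mathrm{fork}_h\,f\ e_1\dots e_n] \mid [\mathrm{join}_h\,e] \mid [\mathrm{bundle}_h\,e_1\dots e_n]$ ($n\ge0$), with handles pairwise distinct. An expression context $C[\cdot]$ is an expression with a single hole occurring in a subexpression position (possibly the whole expression). A program consists of a procedure environment (a finite map from procedure names $f$ to formals $x_1\dots x_n$ and a body expression), a primitive environment in which each primitive $\pi$ has an in-dimension $n$ and out-dimension $m$ (written $\pi:_\# n\to m$), and a main expression. Dimension lattice: $\mathbb{N}_\bot^\top=\{\bot,\top\}\cup\{\uparrow n: n\in\mathbb{N}\}$ with the flat order $\bot\sqsubset\uparrow n\sqsubset\top$ (distinct $\uparrow n$ incomparable), join $\sqcup$; $\mathbb{N}_\bot=\mathbb{N}_\bot^\top\setminus\{\top\}$. The relation $e:_\# d$ ($d\in\mathbb{N}_\bot$) and procedure dimensions $f:_\#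 n\to d$ are defined mutually recursively: $x_h:_\#\uparrow1$; $c_h:_\#\uparrow1$; $[\mathrm{bundle}_{h_0}e_1..e_n]:_\#\uparrow n$ if $e_i:_\# d_i$ with $d_i\sqsubseteq\uparrow1$ for all $i$; $[\mathrm{let}_{h_0}x_1..x_n\text{ be }e_1\text{ in }e_2]:_\# d_2$ if $e_1:_\# d_1$, $e_2:_\# d_2$, $d_1\sqsubseteq\uparrow m$ for some $m\ge n$ and $d_2\sqsubset\top$; $[\mathrm{primitive}_{h_0}\pi\,e_1..e_n]:_\#\uparrow m$ if $\pi:_\# n\to m$ and $e_i:_\# d_i\sqsubseteq\uparrow1$ for all $i$; $[\mathrm{call}_{h_0}f\,e_1..e_n]:_\# d$ if $f:_\# n\to d$, $e_i:_\# d_i\sqsubseteq\uparrow1$ for all $i$, and $d\sqsubset\top$; $[\mathrm{if}_{h_0}e_1\in\{c_1..c_n\}\text{ then }e_2\text{ else }e_3]:_\# d$ if $e_j:_\# d_j$ ($j=1,2,3$), $d_1\sqsubseteq\uparrow1$, $d=d_2\sqcup d_3$ and $d\sqsubset\top$; $[\mathrm{fork}_{h_0}f\,e_1..e_n]:_\#\uparrow1$ if $f:_\# n\to d$ with $d\sqsubseteq\uparrow1$ and $e_i:_\# d_i\sqsubseteq\uparrow1$ for all $i$; $[\mathrm{join}_{h_0}e_1]:_\#\uparrow1$ if $e_1:_\# d_1\sqsubseteq\uparrow1$. For each procedure $f$ of the program with formals $x_1..x_n$ and body $b$, $f:_\# n\to d$ where $d$ is the least fixpoint such that $\#(b)=d$.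 Finally $\#:\text{Expressions}\to\mathbb{N}_\bot^\top$ is the total extension of $:_\#$, returning $\top$ where $:_\#$ is undefined. *)

theory Defs
  imports Main
begin

text \<open>Type parameters: 'x variables, 'f procedure names, 'p primitive names,
  'h handles, 'c values.\<close>

datatype ('x, 'f, 'p, 'h, 'c) expr =
    Var 'h 'x
  | Const 'h 'c
  | Let 'h "'x list" "('x, 'f, 'p, 'h, 'c) expr" "('x, 'f, 'p, 'h, 'c) expr"
  | Call 'h 'f "('x, 'f, 'p, 'h, 'c) expr list"
  | Prim 'h 'p "('x, 'f, 'p, 'h, 'c) expr list"
  | If 'h "('x, 'f, 'p, 'h, 'c) expr" "'c list" "('x, 'f, 'p, 'h, 'c) expr" "('x, 'f, 'p, 'h, 'c) expr"
  | Fork 'h 'f "('x, 'f, 'p, 'h, 'c) expr list"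
  | Join 'h "('x, 'f, 'p, 'h, 'c) expr"
  | Bundle 'h "('x, 'f, 'p, 'h, 'c) expr list"

fun handles :: "('x, 'f, 'p, 'h, 'c) expr \<Rightarrow> 'h list" where
  "handles (Var h x) = [h]"
| "handles (Const h c) = [h]"
| "handles (Let h xs e1 e2) = h # handles e1 @ handles e2"
| "handles (Call h f es) = h # concat (map handles es)"
| "handles (Prim h p es) = h # concat (map handles es)"
| "handles (If h e1 cs e2 e3) = h # handles e1 @ handles e2 @ handles e3"
| "handles (Fork h f es) = h # concat (map handles es)"
| "handles (Join h e) = h # handles e"
| "handles (Bundle h es) = h # concat (map handles es)"

definition wf_expr :: "('x, 'f, 'p, 'h, 'c) expr \<Rightarrow> bool" where
  "wf_expr e \<longleftrightarrow> distinct (handles e)"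

datatype ('x, 'f, 'p, 'h, 'c) ctx =
    Hole
  | LetC1 'h "'x list" "('x, 'f, 'p, 'h, 'c) ctx" "('x, 'f, 'p, 'h, 'c) expr"
  | LetC2 'h "'x list" "('x, 'f, 'p, 'h, 'c) expr" "('x, 'f, 'p, 'h, 'c) ctx"
  | CallC 'h 'f "('x, 'f, 'p, 'h, 'c) expr list" "('x, 'f, 'p, 'h, 'c) ctx" "('x, 'f, 'p, 'h, 'c) expr list"
  | PrimC 'h 'p "('x, 'f, 'p, 'h, 'c) expr list" "('x, 'f, 'p, 'h, 'c) ctx" "('x, 'f, 'p, 'h, 'c) expr list"
  | IfC1 'h "('x, 'f, 'p, 'h, 'c) ctx" "'c list" "('x, 'f, 'p, 'h, 'c) expr" "('x, 'f, 'p, 'h, 'c) expr"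
  | IfC2 'h "('x, 'f, 'p, 'h, 'c) expr" "'c list" "('x, 'f, 'p, 'h, 'c) ctx" "('x, 'f, 'p, 'h, 'c) expr"
  | IfC3 'h "('x, 'f, 'p, 'h, 'c) expr" "'c list" "('x, 'f, 'p, 'h, 'c) expr" "('x, 'f, 'p, 'h, 'c) ctx"
  | ForkC 'h 'f "('x, 'f, 'p, 'h, 'c) expr list" "('x, 'f, 'p, 'h, 'c) ctx" "('x, 'f, 'p, 'h, 'c) expr list"
  | JoinC 'h "('x, 'f, 'p, 'h, 'c) ctx"
  | BundleC 'h "('x, 'f, 'p, 'h, 'c) expr list" "('x, 'f, 'p, 'h, 'c) ctx" "('x, 'f, 'p, 'h, 'c) expr list"

fun plug :: "('x, 'f, 'p, 'h, 'c) ctx \<Rightarrow> ('x, 'f, 'p, 'h, 'c) expr \<Rightarrow> ('x, 'f, 'p, 'h, 'c) expr" where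
  "plug Hole e = e"
| "plug (LetC1 h xs C e2) e = Let h xs (plug C e) e2"
| "plug (LetC2 h xs e1 C) e = Let h xs e1 (plug C e)"
| "plug (CallC h f as C bs) e = Call h f (as @ plug C e # bs)"
| "plug (PrimC h p as C bs) e = Prim h p (as @ plug C e # bs)"
| "plug (IfC1 h C cs e2 e3) e = If h (plug C e) cs e2 e3"
| "plug (IfC2 h e1 cs C e3) e = If h e1 cs (plug C e) e3"
| "plug (IfC3 h e1 cs e2 C) e = If h e1 cs e2 (plug C e)"
| "plug (ForkC h f as C bs) e = Fork h f (as @ plug C e # bs)"
| "plug (JoinC h C) e = Join h (plug C e)"
| "plug (BundleC h as C bs) e = Bundle h (as @ plug C e # bs)"

record ('x, 'f, 'p, 'h, 'c) program =
  procs :: "'f \<rightharpoonup> ('x list \<times> ('x, 'f, 'p, 'h, 'c) expr)"  \<comment> \<open>formals and body\<close>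
  prims :: "'p \<Rightarrow> nat \<times> nat"   \<comment> \<open>in-dimension and out-dimension\<close>
  main :: "('x, 'f, 'p, 'h, 'c) expr"

definition wf_program :: "('x, 'f, 'p, 'h, 'c) program \<Rightarrow> bool" where
  "wf_program P \<longleftrightarrow> finite (dom (procs P))
     \<and> (\<forall>f xs b. procs P f = Some (xs, b) \<longrightarrow> wf_expr b)
     \<and> wf_expr (main P)"

datatype dim = Bot | Up nat | Top

definition dle :: "dim \<Rightarrow> dim \<Rightarrow> bool" (infix "\<sqsubseteq>" 50) where
  "a \<sqsubseteq> b \<longleftrightarrow> a = Bot \<or> b = Top \<or> a = b"

fun djoin :: "dim \<Rightarrow> dim \<Rightarrow> dim" (infixl "\<squnion>" 65) where
  "Bot \<squnion> b = b"
| "a \<squnion> Bot = a"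
| "Up n \<squnion> Up m = (if n = m then Up n else Top)"
| "Top \<squnion> _ = Top"
| "_ \<squnion> Top = Top"

section \<open>Dimensions of expressions, relative to an assignment D of result
  dimensions to procedures; Top wherever the relation :# is undefined\<close>

fun dimE :: "('x, 'f, 'p, 'h, 'c) program \<Rightarrow> ('f \<Rightarrow> dim) \<Rightarrow> ('x, 'f, 'p, 'h, 'c) expr \<Rightarrow> dim" where
  "dimE P D (Var h x) = Up 1"
| "dimE P D (Const h c) = Up 1"
| "dimE P D (Bundle h es) =
     (if (\<forall>e\<in>set es. dimE P D e \<sqsubseteq> Up 1) then Up (length es) else Top)"
| "dimE P D (Let h xs e1 e2) =
     (if (\<exists>m\<ge>length xs. dimE P D e1 \<sqsubseteq> Up m) \<and> dimE P D e2 \<noteq> Top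
      then dimE P D e2 else Top)"
| "dimE P D (Prim h p es) =
     (if fst (prims P p) = length es \<and> (\<forall>e\<in>set es. dimE P D e \<sqsubseteq> Up 1)
      then Up (snd (prims P p)) else Top)"
| "dimE P D (Call h f es) =
     (case procs P f of
        None \<Rightarrow> Top
      | Some (xs, b) \<Rightarrow>
          (if length xs = length es \<and> (\<forall>e\<in>set es. dimE P D e \<sqsubseteq> Up 1) \<and> D f \<noteq> Top
           then D f else Top))"
| "dimE P D (If h e1 cs e2 e3) =
     (if dimE P D e1 \<sqsubseteq> Up 1 \<and> dimE P D e2 \<squnion> dimE P D e3 \<noteq> Top
      then dimE P D e2 \<squnion> dimE P D e3 else Top)"
| "dimE P D (Fork h f es) =
     (case procs P f of
        None \<Rightarrow> Top
      | Some (xs, b) \<Rightarrow>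
          (if length xs = length es \<and> D f \<sqsubseteq> Up 1 \<and> (\<forall>e\<in>set es. dimE P D e \<sqsubseteq> Up 1)
           then Up 1 else Top))"
| "dimE P D (Join h e) = (if dimE P D e \<sqsubseteq> Up 1 then Up 1 else Top)"

definition proc_step :: "('x, 'f, 'p, 'h, 'c) program \<Rightarrow> ('f \<Rightarrow> dim) \<Rightarrow> ('f \<Rightarrow> dim)" where
  "proc_step P D f = (case procs P f of None \<Rightarrow> Bot | Some (xs, b) \<Rightarrow> dimE P D b)"

definition proc_dims :: "('x, 'f, 'p, 'h, 'c) program \<Rightarrow> ('f \<Rightarrow> dim)" where
  "proc_dims P = (THE D. proc_step P D = D \<and>
                    (\<forall>D'. proc_step P D' = D' \<longrightarrow> (\<forall>f. D f \<sqsubseteq> D' f)))"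

definition dim :: "('x, 'f, 'p, 'h, 'c) program \<Rightarrow> ('x, 'f, 'p, 'h, 'c) expr \<Rightarrow> dim" where
  "dim P e = dimE P (proc_dims P) e"

end

theory Submission
  imports Defs
begin

text \<open>Every typing rule for \<open>:\<^sub>#\<close> only asks the dimensions of the immediate
  subexpressions to lie below some bound, and an undefined dimension is \<open>Top\<close>.
  Lowering the dimension of one subexpression therefore either keeps the side
  conditions satisfied and lowers the result (\<open>\<squnion>\<close> is monotone), or the enlarged
  expression already has dimension \<open>Top\<close>. Induction on the context lifts this
  from immediate subexpressions to arbitrary holes, for any assignment of
  procedure dimensions, in particular the least fixpoint.\<close>

lemma dle_refl [simp]: "a \<sqsubseteq> a"
  by (simp add: dle_def)

lemma dle_trans: "a \<sqsubseteq> b \<Longrightarrow> b \<sqsubseteq> c \<Longrightarrow> a \<sqsubseteq> c"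
  by (auto simp: dle_def)

lemma djoin_mono: "a \<sqsubseteq> a' \<Longrightarrow> b \<sqsubseteq> b' \<Longrightarrow> a \<squnion> b \<sqsubseteq> a' \<squnion> b'"
  by (cases a; cases a'; cases b; cases b') (auto simp: dle_def)

lemma bounded_args_antimono:
  assumes "d e \<sqsubseteq> d e'" and "\<forall>x\<in>set (as @ e' # bs). d x \<sqsubseteq> u"
  shows "\<forall>x\<in>set (as @ e # bs). d x \<sqsubseteq> u"
  using assms dle_trans by auto

lemma dimE_plug_mono:
  assumes "dimE P D e \<sqsubseteq> dimE P D e'"
  shows "dimE P D (plug C e) \<sqsubseteq> dimE P D (plug C e')"
proof (induction C)
  case Hole
  then show ?case using assms by simp
next
  case (IfC2 h e1 cs C e3)
  then have "dimE P D (plug C e) \<squnion> dimE P D e3 \<sqsubseteq> dimE P D (plug C e') \<squnion> dimE P D e3"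
    by (simp add: djoin_mono)
  then show ?case by (auto simp: dle_def)
next
  case (IfC3 h e1 cs e2 C)
  then have "dimE P D e2 \<squnion> dimE P D (plug C e) \<sqsubseteq> dimE P D e2 \<squnion> dimE P D (plug C e')"
    by (simp add: djoin_mono)
  then show ?case by (auto simp: dle_def)
next
  case (CallC h f as C bs)
  then show ?case
    using bounded_args_antimono[of "dimE P D"] by (auto split: option.splits simp: dle_def)
next
  case (ForkC h f as C bs)
  then show ?case
    using bounded_args_antimono[of "dimE P D"] by (auto split: option.splits simp: dle_def)
next
  case (PrimC h p as C bs)
  then show ?case using bounded_args_antimono[of "dimE P D"] by (auto simp: dle_def)
next
  case (BundleC h as C bs)
  then show ?case using bounded_args_antimono[of "dimE P D"] by (auto simp: dle_def)
qed (auto simp: dle_def)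

theorem mainTheorem3:
  fixes P :: "('x, 'f, 'p, 'h, 'c) program"
    and C :: "('x, 'f, 'p, 'h, 'c) ctx"
    and e e' :: "('x, 'f, 'p, 'h, 'c) expr"
  assumes "wf_program P"
    and "wf_expr (plug C e)" and "wf_expr (plug C e')"
    and "dim P e \<sqsubseteq> dim P e'"
  shows "dim P (plug C e) \<sqsubseteq> dim P (plug C e')"
  using dimE_plug_mono assms(4) unfolding dim_def by blast

end
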